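(* Let $\boldsymbol{\mathcal W}(x,u)=\sum_{n\ge0}\sum_{k\ge0}x^nu^k\sum_{r\in\mathcal W_{n,k}}\d(r)$. Then \[ \boldsymbol{\mathcal W}=x(1+u)\boldsymbol{\mathcal W}+2ux^2\Big(\mathcal M\boldsymbol{\mathcal W}+\boldsymbol{\mathcal M}\mathcal W+\mathcal W\,\tfrac{\partial}{\partial x}(x\mathcal M)\Big) \] (all functions evaluated at $(x,u)$), and explicitly \[ \boldsymbol{\mathcal W}(x,u)=\frac{2ux^2}{\left((u-1)^2x^2-2(u+1)x+1\right)^2}. \]
   Context: Steps: $U=(1,1)$, $D=(1,-1)$, two distinguishable copies $O_1,O_2$ of $(1,0)$. $\mathcal W_{n,k}$: lattice paths from $(0,0)$ to $(n,0)$ with steps in $\{U,D,O_1,O_2\}$ using exactly $k$ steps of type $U$ or $O_1$; $\mathcal M_{n,k}\subseteq\mathcal W_{n,k}$: those staying weakly above the $x$-axis. For a path $r$ with heights $r_0,\dots,r_n$ (and $r_n=0$), $\d(r)=\sum_{i=0}^n|r_i|$. $\mathcal M(x,u)=\sum|\mathcal M_{n,k}|x^nu^k$, $\mathcal W(x,u)=\sum|\mathcal W_{n,k}|x^nu^k$, $\boldsymbol{\mathcal M}(x,u)=\sum_{n,k}x^nu^k\sum_{r\in\mathcal M_{n,k}}\d(r)$. *)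

theory Defs
  imports "HOL-Computational_Algebra.Computational_Algebra"
begin

text \<open>Steps: U = (1,1), D = (1,-1), and two distinguishable flat steps O1, O2 = (1,0).\<close>
datatype step = U | D | O1 | O2

fun step_h :: "step \<Rightarrow> int" where
  "step_h U = 1" | "step_h D = -1" | "step_h O1 = 0" | "step_h O2 = 0"

definition height :: "step list \<Rightarrow> nat \<Rightarrow> int" where
  "height r i = (\<Sum>j<i. step_h (r ! j))"

definition marked :: "step \<Rightarrow> bool" where
  "marked s \<longleftrightarrow> s = U \<or> s = O1"

definition Wset :: "nat \<Rightarrow> nat \<Rightarrow> step list set" where
  "Wset n k = {r. length r = n \<and> height r n = 0 \<and> length (filter marked r) = k}"

definition Mset :: "nat \<Rightarrow> nat \<Rightarrow> step list set" where
  "Mset n k = {r \<in> Wset n k. \<forall>i\<le>n. height r i \<ge> 0}"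

definition dsum :: "step list \<Rightarrow> int" where
  "dsum r = (\<Sum>i\<le>length r. \<bar>height r i\<bar>)"

text \<open>Bivariate generating functions are formal power series in x whose coefficients
  lie in the fraction field of Z[u] (the coefficient of x^n is a polynomial in u).\<close>
type_synonym bgf = "int poly fract fps"

definition gf :: "(nat \<Rightarrow> nat \<Rightarrow> int) \<Rightarrow> bgf" where
  "gf c = Abs_fps (\<lambda>n. to_fract (\<Sum>k\<le>n. monom (c n k) k))"

definition uvar :: bgf where
  "uvar = fps_const (to_fract [:0, 1:])"

definition Mgf :: bgf where "Mgf = gf (\<lambda>n k. int (card (Mset n k)))"
definition Wgf :: bgf where "Wgf = gf (\<lambda>n k. int (card (Wset n k)))"
definition Mbgf :: bgf where "Mbgf = gf (\<lambda>n k. \<Sum>r\<in>Mset n k. dsum r)"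
definition Wbgf :: bgf where "Wbgf = gf (\<lambda>n k. \<Sum>r\<in>Wset n k. dsum r)"

end

theory Submission
  imports Defs
begin

text \<open>Cut a walk after its first step. A flat step contributes x(1 + u) times the series
  itself. A walk U t decomposes uniquely as U a D b at its first return to the axis, with a
  staying weakly above the axis and b of the same kind as the whole walk; in the unrestricted
  case a walk D t is the mirror image of a walk U t with the same number of marked steps and
  the same d. This yields M = 1 + (1 + u)xM + ux^2M^2 and W = 1 + (1 + u)xW + 2ux^2MW.
  Inside the arch the heights of a are raised by one, so d(U a D b) = d(a) + |a| + 1 + d(b), and
  the term |a| + 1 produces the derivative of xM; this gives the linear equations for the
  bold series. With L = 1 - (1 + u)x - 2ux^2M one gets WL = 1,
  L^2 = (u - 1)^2x^2 - 2(u + 1)x + 1 and (xM)'L = M, and eliminating everything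
  from the equation for the bold W leaves (bold W)L^4 = 2ux^2.\<close>

lemma height_0 [simp]: "height r 0 = 0"
  by (simp add: height_def)

lemma height_Suc: "height r (Suc i) = height r i + step_h (r ! i)"
  by (simp add: height_def)

lemma height_Cons_Suc [simp]: "height (s # r) (Suc i) = step_h s + height r i"
  by (induction i) (auto simp: height_Suc)

lemma height_append:
  "height (a @ b) i = (if i \<le> length a then height a i else height a (length a) + height b (i - length a))"
proof (induction i)
  case (Suc i)
  show ?case
  proof (cases "Suc i \<le> length a")
    case True
    then show ?thesis using Suc by (simp add: height_Suc nth_append)
  next
    case False
    then show ?thesis using Suc
      by (cases "i = length a") (auto simp: height_Suc nth_append Suc_diff_le)
  qed
qed simp

lemma height_take: "i \<le> p \<Longrightarrow> height (take p r) i = height r i"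
  by (simp add: height_def)

lemma height_append_D_Cons_le: "i \<le> length a \<Longrightarrow> height (a @ D # b) i = height a i"
  by (simp add: height_append)

lemma height_append_D_Cons_gt:
  "height (a @ D # b) (Suc (length a) + j) = height a (length a) - 1 + height b j"
  by (simp add: height_append)

lemma step_h_bounds: "-1 \<le> step_h s" "step_h s \<le> 1"
  by (cases s; simp)+

lemma height_hits_minus_one:
  assumes "height r i \<le> -1"
  shows "\<exists>j. 1 \<le> j \<and> j \<le> i \<and> height r j = -1"
  using assms
proof (induction i)
  case (Suc i)
  show ?case
  proof (cases "height r i \<le> -1")
    case True
    then show ?thesis using Suc.IH by (meson le_SucI)
  next
    case False
    then have "height r (Suc i) = -1"
      using Suc.prems step_h_bounds[of "r ! i"] by (simp add: height_Suc)
    then show ?thesis by auto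
  qed
qed simp

definition is_walk :: "bool \<Rightarrow> step list \<Rightarrow> bool" where
  "is_walk nonneg r \<longleftrightarrow>
     height r (length r) = 0 \<and> (nonneg \<longrightarrow> (\<forall>i\<le>length r. 0 \<le> height r i))"

definition marks :: "step list \<Rightarrow> nat" where
  "marks r = length (filter marked r)"

lemma marked_simps [simp]: "marked U" "\<not> marked D" "marked O1" "\<not> marked O2"
  by (auto simp: marked_def)

lemma marks_Nil [simp]: "marks [] = 0"
  by (simp add: marks_def)

lemma marks_Cons [simp]: "marks (s # r) = (if marked s then Suc (marks r) else marks r)"
  by (simp add: marks_def)

lemma marks_append [simp]: "marks (a @ b) = marks a + marks b"
  by (simp add: marks_def)

lemma marks_le_length: "marks r \<le> length r"
  by (simp add: marks_def)

lemma is_walk_Nil [simp]: "is_walk nonneg []"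
  by (simp add: is_walk_def)

lemma is_walk_flat_Cons: "step_h s = 0 \<Longrightarrow> is_walk nonneg (s # r) \<longleftrightarrow> is_walk nonneg r"
  unfolding is_walk_def by (auto simp: less_Suc_eq_le[symmetric] All_less_Suc2)

lemma not_is_walk_nonneg_D_Cons: "\<not> is_walk True (D # r)"
  unfolding is_walk_def by (auto intro: exI[of _ 1])

lemma dsum_Nil [simp]: "dsum [] = 0"
  by (simp add: dsum_def)

lemma dsum_Cons: "dsum (s # r) = (\<Sum>i\<le>length r. \<bar>step_h s + height r i\<bar>)"
  unfolding dsum_def by (simp add: sum.atMost_Suc_shift del: sum.atMost_Suc)

lemma dsum_flat_Cons: "step_h s = 0 \<Longrightarrow> dsum (s # r) = dsum r"
  unfolding dsum_Cons by (simp add: dsum_def)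

fun mirror_step :: "step \<Rightarrow> step" where
  "mirror_step U = D" | "mirror_step D = U" | "mirror_step O1 = O1" | "mirror_step O2 = O2"

lemma mirror_step_mirror_step [simp]: "mirror_step (mirror_step s) = s"
  by (cases s) auto

lemma step_h_mirror_step [simp]: "step_h (mirror_step s) = - step_h s"
  by (cases s) auto

lemma height_mirror: "i \<le> length r \<Longrightarrow> height (map mirror_step r) i = - height r i"
  unfolding height_def by (simp add: sum_negf)

lemma is_walk_mirror: "is_walk False (map mirror_step r) \<longleftrightarrow> is_walk False r"
  unfolding is_walk_def by (simp add: height_mirror)

lemma dsum_mirror: "dsum (map mirror_step r) = dsum r"
  unfolding dsum_def by (simp add: height_mirror)

lemma marks_mirror_eq: "int (marks (map mirror_step r)) = int (marks r) - height r (length r)"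
proof (induction r)
  case (Cons s r)
  then show ?case by (cases s) (simp_all del: length_Cons)
qed simp

lemma marks_mirror: "is_walk False r \<Longrightarrow> marks (map mirror_step r) = marks r"
  using marks_mirror_eq[of r] unfolding is_walk_def by simp

lemma is_walk_arch:
  assumes a: "is_walk True a" and b: "is_walk nonneg b"
  shows "is_walk nonneg (U # a @ D # b)"
proof -
  have ha: "height a (length a) = 0" "\<And>i. i \<le> length a \<Longrightarrow> 0 \<le> height a i"
    using a by (auto simp: is_walk_def)
  have "height (U # a @ D # b) (Suc (Suc (length a) + length b)) = 0"
    unfolding height_Cons_Suc height_append_D_Cons_gt using ha b by (simp add: is_walk_def)
  moreover have "0 \<le> height (U # a @ D # b) i"
    if nonneg and i: "i \<le> Suc (Suc (length a) + length b)" for i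
  proof (cases i)
    case (Suc k)
    show ?thesis
    proof (cases "k \<le> length a")
      case True
      then show ?thesis using Suc ha by (simp add: height_append_D_Cons_le)
    next
      case False
      then obtain j where j: "k = Suc (length a) + j"
        by (metis add_Suc le_add1 less_imp_Suc_add not_le)
      then have "0 \<le> height b j" using i Suc b \<open>nonneg\<close> by (auto simp: is_walk_def)
      then show ?thesis using Suc j ha height_append_D_Cons_gt[of a b j] by simp
    qed
  qed simp
  ultimately show ?thesis unfolding is_walk_def by simp
qed

lemma first_descent_below_zero:
  assumes end_t: "height t (length t) = -1"
  obtains p where "p < length t" "t ! p = D" "height t p = 0" "\<And>i. i \<le> p \<Longrightarrow> 0 \<le> height t i"
proof -
  obtain m where m: "length t = Suc m" using end_t by (cases "length t") auto
  define p where "p = (LEAST p. height t (Suc p) = -1)"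
  have hp: "height t (Suc p) = -1"
    unfolding p_def by (rule LeastI[of _ m]) (use end_t m in simp)
  have plt: "p < length t"
    using m Least_le[of "\<lambda>p. height t (Suc p) = -1" m] end_t unfolding p_def by simp
  have nonneg_before: "0 \<le> height t i" if "i \<le> p" for i
  proof (rule ccontr)
    assume "\<not> 0 \<le> height t i"
    then obtain j where j: "1 \<le> j" "j \<le> i" "height t j = -1"
      using height_hits_minus_one[of t i] by auto
    then obtain q where q: "j = Suc q" by (cases j) auto
    then have "q < p" using j that by simp
    then have "height t (Suc q) \<noteq> -1" unfolding p_def by (rule not_less_Least)
    then show False using j q by simp
  qed
  have "height t p + step_h (t ! p) = -1" using hp by (simp add: height_Suc)
  then have "height t p = 0" and "t ! p = D"
    using nonneg_before[of p] step_h_bounds[of "t ! p"] by (cases "t ! p"; simp)+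
  then show thesis using that plt nonneg_before by blast
qed

lemma is_walk_U_Cons_split:
  assumes walk: "is_walk nonneg (U # t)"
  obtains a b where "t = a @ D # b" "is_walk True a" "is_walk nonneg b"
proof -
  have end_t: "height t (length t) = -1" using walk unfolding is_walk_def by simp
  obtain p where plt: "p < length t" and tpD: "t ! p = D" and h0: "height t p = 0"
    and nonneg_before: "\<And>i. i \<le> p \<Longrightarrow> 0 \<le> height t i"
    using first_descent_below_zero[OF end_t] by blast
  define a where "a = take p t"
  define b where "b = drop (Suc p) t"
  have t: "t = a @ D # b"
    unfolding a_def b_def using id_take_nth_drop[OF plt] tpD by simp
  have la: "length a = p" unfolding a_def using plt by simp
  have a: "is_walk True a"
    unfolding is_walk_def la using h0 nonneg_before by (simp add: a_def height_take)
  have hb: "height t (Suc (length a) + j) = height b j - 1" for j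
    using a by (subst t, subst height_append_D_Cons_gt) (simp add: is_walk_def)
  have lt: "length t = Suc (length a) + length b" by (simp add: t)
  have "0 \<le> height b j" if nonneg "j \<le> length b" for j
  proof -
    have "Suc (Suc (length a) + j) \<le> length (U # t)" using that lt by simp
    then have "0 \<le> height (U # t) (Suc (Suc (length a) + j))"
      using walk \<open>nonneg\<close> unfolding is_walk_def by blast
    then show ?thesis using hb[of j] by simp
  qed
  moreover have "height b (length b) = 0" using hb[of "length b"] lt end_t by simp
  ultimately have "is_walk nonneg b" unfolding is_walk_def by simp
  with t a show thesis by (rule that)
qed

lemma arch_unique:
  assumes eq: "a @ D # b = a' @ D # b'" and a: "is_walk True a" and a': "is_walk True a'"
  shows "a = a' \<and> b = b'"
proof -
  have le: "length a \<le> length a'"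
    if eq: "a @ D # b = a' @ D # b'" and a: "is_walk True a" and a': "is_walk True a'"
    for a b a' b'
  proof (rule ccontr)
    assume "\<not> length a \<le> length a'"
    then have "Suc (length a') \<le> length a" by simp
    then have "0 \<le> height (a @ D # b) (Suc (length a'))"
      using a by (auto simp: is_walk_def height_append_D_Cons_le)
    moreover have "height (a' @ D # b') (Suc (length a' + 0)) = -1"
      using a' height_append_D_Cons_gt[of a' b' 0] by (simp add: is_walk_def)
    ultimately show False using eq by simp
  qed
  have "length a = length a'" using le[OF eq a a'] le[OF eq[symmetric] a' a] by simp
  then show ?thesis using eq by simp
qed

lemma dsum_arch:
  assumes a: "is_walk True a"
  shows "dsum (U # a @ D # b) = dsum a + int (length a) + 1 + dsum b"
proof -
  let ?t = "a @ D # b"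
  let ?f = "\<lambda>i. \<bar>1 + height ?t i\<bar>"
  have ha: "height a (length a) = 0" "\<And>i. i \<le> length a \<Longrightarrow> 0 \<le> height a i"
    using a by (auto simp: is_walk_def)
  have "dsum (U # ?t) = (\<Sum>i\<le>length a + Suc (length b). ?f i)"
    by (simp add: dsum_Cons)
  also have "\<dots> = (\<Sum>i\<le>length a. ?f i) + (\<Sum>i = Suc (length a)..length a + Suc (length b). ?f i)"
    by (rule sum_up_index_split)
  also have "(\<Sum>i\<le>length a. ?f i) = (\<Sum>i\<le>length a. 1 + \<bar>height a i\<bar>)"
    using ha by (intro sum.cong) (auto simp: height_append_D_Cons_le)
  also have "\<dots> = int (length a) + 1 + dsum a"
    by (simp add: sum.distrib dsum_def)
  also have "(\<Sum>i = Suc (length a)..length a + Suc (length b). ?f i)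
      = (\<Sum>j = 0..length b. ?f (j + Suc (length a)))"
    using sum.shift_bounds_cl_nat_ivl[of ?f 0 "Suc (length a)" "length b"] by (simp add: add.commute)
  also have "\<dots> = (\<Sum>j = 0..length b. \<bar>height b j\<bar>)"
    using ha height_append_D_Cons_gt[of a b] by (intro sum.cong) (simp_all add: add.commute)
  also have "\<dots> = dsum b" by (simp add: dsum_def atLeast0AtMost)
  finally show ?thesis by simp
qed

definition u_fract :: "int poly fract" where
  "u_fract = to_fract [:0, 1:]"

lemma fps_const_u_fract: "fps_const u_fract = uvar"
  by (simp add: uvar_def u_fract_def)

lemma to_fract_monom: "to_fract (monom c k) = of_int c * u_fract ^ k"
proof -
  have of_int: "to_fract (of_int c :: int poly) = of_int c"
    by (induction c rule: int_induct[where k = 0]) simp_all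
  have power: "to_fract ((x :: int poly) ^ k) = to_fract x ^ k" for x
    by (induction k) simp_all
  have "monom c k = of_int c * [:0, 1:] ^ k"
    by (simp add: monom_altdef of_int_poly)
  then show ?thesis by (simp add: u_fract_def power of_int)
qed

definition walks :: "bool \<Rightarrow> nat \<Rightarrow> step list set" where
  "walks nonneg n = {r. length r = n \<and> is_walk nonneg r}"

lemma UNIV_step: "(UNIV :: step set) = {U, D, O1, O2}"
  using step.exhaust by auto

lemma finite_walks [simp]: "finite (walks nonneg n)"
proof -
  have "finite (UNIV :: step set)" by (simp add: UNIV_step)
  then have "finite {r :: step list. length r = n}"
    using finite_lists_length_eq[of UNIV n] by simp
  then show ?thesis by (rule finite_subset[rotated]) (auto simp: walks_def)
qed

lemma walks_0: "walks nonneg 0 = {[]}"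
  by (auto simp: walks_def)

definition walk_gf :: "bool \<Rightarrow> (step list \<Rightarrow> int) \<Rightarrow> bgf" where
  "walk_gf nonneg f = Abs_fps (\<lambda>n. \<Sum>r\<in>walks nonneg n. of_int (f r) * u_fract ^ marks r)"

lemma walk_gf_nth: "walk_gf nonneg f $ n = (\<Sum>r\<in>walks nonneg n. of_int (f r) * u_fract ^ marks r)"
  by (simp add: walk_gf_def)

lemma gf_eq_walk_gf:
  assumes "\<And>n k. A n k = {r \<in> walks nonneg n. marks r = k}"
  shows "gf (\<lambda>n k. \<Sum>r\<in>A n k. f r) = walk_gf nonneg f"
proof (rule fps_ext)
  fix n
  have "gf (\<lambda>n k. \<Sum>r\<in>A n k. f r) $ n
      = (\<Sum>k\<le>n. \<Sum>r\<in>{r \<in> walks nonneg n. marks r = k}. of_int (f r) * u_fract ^ marks r)"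
    by (simp add: gf_def to_fract_monom assms sum_distrib_right)
  also have "\<dots> = walk_gf nonneg f $ n"
    unfolding walk_gf_nth
    by (rule sum.group[OF finite_walks]) (auto simp: walks_def intro: order.trans[OF marks_le_length])
  finally show "gf (\<lambda>n k. \<Sum>r\<in>A n k. f r) $ n = walk_gf nonneg f $ n" .
qed

lemma Wgf_walk_gf: "Wgf = walk_gf False (\<lambda>_. 1)"
  unfolding Wgf_def by (subst gf_eq_walk_gf[symmetric])
    (auto simp: Wset_def walks_def is_walk_def marks_def)

lemma Mgf_walk_gf: "Mgf = walk_gf True (\<lambda>_. 1)"
  unfolding Mgf_def by (subst gf_eq_walk_gf[symmetric])
    (auto simp: Mset_def Wset_def walks_def is_walk_def marks_def)

lemma Wbgf_walk_gf: "Wbgf = walk_gf False dsum"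
  unfolding Wbgf_def by (rule gf_eq_walk_gf) (auto simp: Wset_def walks_def is_walk_def marks_def)

lemma Mbgf_walk_gf: "Mbgf = walk_gf True dsum"
  unfolding Mbgf_def
  by (rule gf_eq_walk_gf) (auto simp: Mset_def Wset_def walks_def is_walk_def marks_def)

lemma walk_gf_add: "walk_gf nonneg (\<lambda>r. f r + g r) = walk_gf nonneg f + walk_gf nonneg g"
  by (rule fps_ext) (simp add: walk_gf_nth sum.distrib algebra_simps)

lemma walk_gf_length:
  "walk_gf nonneg (\<lambda>r. int (length r) + 1) = fps_deriv (fps_X * walk_gf nonneg (\<lambda>_. 1))"
proof (rule fps_ext)
  fix n
  have "walk_gf nonneg (\<lambda>r. int (length r) + 1) $ n
      = (\<Sum>r\<in>walks nonneg n. of_nat (n + 1) * u_fract ^ marks r)"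
    unfolding walk_gf_nth by (intro sum.cong) (auto simp: walks_def)
  also have "\<dots> = of_nat (n + 1) * walk_gf nonneg (\<lambda>_. 1) $ n"
    by (simp add: walk_gf_nth sum_distrib_left)
  finally show "walk_gf nonneg (\<lambda>r. int (length r) + 1) $ n = fps_deriv (fps_X * walk_gf nonneg (\<lambda>_. 1)) $ n"
    by (simp add: algebra_simps)
qed

definition walk_pairs :: "bool \<Rightarrow> bool \<Rightarrow> nat \<Rightarrow> (step list \<times> step list) set" where
  "walk_pairs nonneg1 nonneg2 k =
     {(a, b). length a + length b = k \<and> is_walk nonneg1 a \<and> is_walk nonneg2 b}"

lemma walk_gf_mult:
  "walk_gf nonneg1 f * walk_gf nonneg2 g = Abs_fps (\<lambda>k.
     \<Sum>(a, b)\<in>walk_pairs nonneg1 nonneg2 k. of_int (f a * g b) * u_fract ^ (marks a + marks b))"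
proof (rule fps_ext)
  fix k
  have "(walk_gf nonneg1 f * walk_gf nonneg2 g) $ k = (\<Sum>i=0..k.
      \<Sum>(a, b)\<in>walks nonneg1 i \<times> walks nonneg2 (k - i). of_int (f a * g b) * u_fract ^ (marks a + marks b))"
    by (simp add: fps_mult_nth walk_gf_nth sum_product sum.cartesian_product power_add mult_ac)
  also have "\<dots> = (\<Sum>(a, b)\<in>walk_pairs nonneg1 nonneg2 k. of_int (f a * g b) * u_fract ^ (marks a + marks b))"
    by (subst sum.Sigma, simp_all)
      (rule sum.reindex_bij_witness[where i = "\<lambda>(a, b). (length a, (a, b))" and j = snd],
       auto simp: walk_pairs_def walks_def)
  finally show "(walk_gf nonneg1 f * walk_gf nonneg2 g) $ k = Abs_fps (\<lambda>k.
     \<Sum>(a, b)\<in>walk_pairs nonneg1 nonneg2 k. of_int (f a * g b) * u_fract ^ (marks a + marks b)) $ k"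
    by simp
qed

lemma fps_eq_const_plus_X_mult:
  fixes A B :: "'a::comm_ring_1 fps"
  assumes "\<And>n. A $ Suc n = B $ n"
  shows "A = fps_const (A $ 0) + fps_X * B"
proof (rule fps_ext)
  fix n
  show "A $ n = (fps_const (A $ 0) + fps_X * B) $ n"
    using assms by (cases n) simp_all
qed

definition step_gf :: "bool \<Rightarrow> step \<Rightarrow> (step list \<Rightarrow> int) \<Rightarrow> bgf" where
  "step_gf nonneg s f = Abs_fps (\<lambda>m.
     \<Sum>t\<in>Cons s -` walks nonneg (Suc m). of_int (f (s # t)) * u_fract ^ marks (s # t))"

lemma finite_Cons_vimage_walks: "finite (Cons s -` walks nonneg n)"
  by (rule finite_vimageI) simp_all

lemma walk_gf_first_step:
  "walk_gf nonneg f = fps_const (of_int (f [])) + fps_X * (\<Sum>s\<in>UNIV. step_gf nonneg s f)"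
proof -
  have "walk_gf nonneg f $ Suc m = (\<Sum>s\<in>UNIV. step_gf nonneg s f) $ m" for m
  proof -
    have "walk_gf nonneg f $ Suc m = (\<Sum>(s, t)\<in>Sigma UNIV (\<lambda>s. Cons s -` walks nonneg (Suc m)).
        of_int (f (s # t)) * u_fract ^ marks (s # t))"
      unfolding walk_gf_nth
      by (rule sum.reindex_bij_witness[where i = "\<lambda>(s, t). s # t" and j = "\<lambda>r. (hd r, tl r)"])
         (auto simp: walks_def length_Suc_conv)
    also have "\<dots> = (\<Sum>s\<in>UNIV. step_gf nonneg s f) $ m"
      by (subst sum.Sigma[symmetric]) (simp_all add: UNIV_step finite_Cons_vimage_walks step_gf_def fps_sum_nth)
    finally show ?thesis .
  qed
  then show ?thesis
    by (subst fps_eq_const_plus_X_mult[of "walk_gf nonneg f"]) (simp_all add: walk_gf_nth walks_0)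
qed

lemma step_gf_flat:
  assumes "step_h s = 0" and "\<And>t. f (s # t) = f t"
  shows "step_gf nonneg s f = (if marked s then uvar else 1) * walk_gf nonneg f"
proof -
  have "Cons s -` walks nonneg (Suc m) = walks nonneg m" for m
    using assms(1) by (auto simp: walks_def is_walk_flat_Cons)
  then show ?thesis
    by (intro fps_ext) (simp add: step_gf_def walk_gf_nth assms(2) sum_distrib_left
        fps_const_u_fract[symmetric] mult_ac)
qed

lemma step_gf_D_nonneg: "step_gf True D f = 0"
  by (simp add: step_gf_def walks_def not_is_walk_nonneg_D_Cons fps_zero_def)

lemma step_gf_D_mirror:
  assumes f: "\<And>r. f (map mirror_step r) = f r"
  shows "step_gf False D f = step_gf False U f"
proof (rule fps_ext)
  fix m
  have "(\<Sum>t\<in>Cons D -` walks False (Suc m). of_int (f (D # t)) * u_fract ^ marks (D # t))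
      = (\<Sum>t\<in>Cons U -` walks False (Suc m). of_int (f (U # t)) * u_fract ^ marks (U # t))"
  proof (rule sum.reindex_bij_witness[where i = "map mirror_step" and j = "map mirror_step"])
    fix t
    assume "t \<in> Cons D -` walks False (Suc m)"
    then have walk: "is_walk False (D # t)" and len: "length t = m" by (simp_all add: walks_def)
    show "map mirror_step (map mirror_step t) = t" by (simp add: comp_def)
    have "is_walk False (map mirror_step (D # t))" using walk by (simp only: is_walk_mirror)
    then show "map mirror_step t \<in> Cons U -` walks False (Suc m)" using len by (simp add: walks_def)
    show "of_int (f (U # map mirror_step t)) * u_fract ^ marks (U # map mirror_step t)
        = of_int (f (D # t)) * u_fract ^ marks (D # t)"
      using f[of "D # t"] marks_mirror[OF walk] by simp
  next
    fix t
    assume "t \<in> Cons U -` walks False (Suc m)"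
    then have walk: "is_walk False (U # t)" and len: "length t = m" by (simp_all add: walks_def)
    show "map mirror_step (map mirror_step t) = t" by (simp add: comp_def)
    have "is_walk False (map mirror_step (U # t))" using walk by (simp only: is_walk_mirror)
    then show "map mirror_step t \<in> Cons D -` walks False (Suc m)" using len by (simp add: walks_def)
  qed
  then show "step_gf False D f $ m = step_gf False U f $ m"
    by (simp add: step_gf_def)
qed

lemma Cons_U_vimage_walks_1: "Cons U -` walks nonneg (Suc 0) = {}"
  by (auto simp: walks_def is_walk_def)

lemma Cons_U_vimage_walks:
  "Cons U -` walks nonneg (Suc (Suc m)) = (\<lambda>(a, b). a @ D # b) ` walk_pairs True nonneg m"
proof (intro equalityI subsetI)
  fix t
  assume "t \<in> Cons U -` walks nonneg (Suc (Suc m))"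
  then have len: "length t = Suc m" and walk: "is_walk nonneg (U # t)" by (simp_all add: walks_def)
  obtain a b where "t = a @ D # b" "is_walk True a" "is_walk nonneg b"
    using is_walk_U_Cons_split[OF walk] .
  then show "t \<in> (\<lambda>(a, b). a @ D # b) ` walk_pairs True nonneg m"
    using len by (intro image_eqI[where x = "(a, b)"]) (auto simp: walk_pairs_def)
qed (auto simp: walk_pairs_def walks_def intro: is_walk_arch)

lemma inj_on_arch: "inj_on (\<lambda>(a, b). a @ D # b) (walk_pairs True nonneg m)"
  by (auto simp: inj_on_def walk_pairs_def dest: arch_unique)

lemma step_gf_U: "step_gf nonneg U f = fps_X * uvar * Abs_fps (\<lambda>m.
    \<Sum>(a, b)\<in>walk_pairs True nonneg m. of_int (f (U # a @ D # b)) * u_fract ^ (marks a + marks b))"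
proof (rule fps_ext)
  fix n
  show "step_gf nonneg U f $ n = (fps_X * uvar * Abs_fps (\<lambda>m.
    \<Sum>(a, b)\<in>walk_pairs True nonneg m. of_int (f (U # a @ D # b)) * u_fract ^ (marks a + marks b))) $ n"
  proof (cases n)
    case 0
    then show ?thesis by (simp add: step_gf_def Cons_U_vimage_walks_1)
  next
    case (Suc m)
    then show ?thesis
      unfolding step_gf_def fps_const_u_fract[symmetric]
      by (simp add: Cons_U_vimage_walks sum.reindex[OF inj_on_arch])
        (simp add: case_prod_unfold sum_distrib_left mult_ac)
  qed
qed

lemma walk_gf_decompose:
  assumes flat: "\<And>s r. step_h s = 0 \<Longrightarrow> f (s # r) = f r"
    and mirror: "\<And>r. f (map mirror_step r) = f r"
  shows "walk_gf nonneg f = fps_const (of_int (f [])) + fps_X * ((1 + uvar) * walk_gf nonneg f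
           + (if nonneg then 1 else 2) * step_gf nonneg U f)"
proof -
  have "step_gf nonneg D f = (if nonneg then 0 else step_gf nonneg U f)"
    using step_gf_D_nonneg step_gf_D_mirror[of f, OF mirror] by (cases nonneg) simp_all
  moreover have "step_gf nonneg O1 f = uvar * walk_gf nonneg f" "step_gf nonneg O2 f = walk_gf nonneg f"
    by (simp_all add: step_gf_flat flat)
  ultimately show ?thesis
    by (subst walk_gf_first_step) (simp add: UNIV_step algebra_simps)
qed

lemma step_gf_U_count: "step_gf nonneg U (\<lambda>_. 1) = fps_X * uvar * (Mgf * walk_gf nonneg (\<lambda>_. 1))"
  by (simp add: step_gf_U Mgf_walk_gf walk_gf_mult)

lemma step_gf_U_dsum:
  "step_gf nonneg U dsum
     = fps_X * uvar * ((Mbgf + fps_deriv (fps_X * Mgf)) * walk_gf nonneg (\<lambda>_. 1) + Mgf * walk_gf nonneg dsum)"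
proof -
  have "Mbgf + fps_deriv (fps_X * Mgf) = walk_gf True (\<lambda>a. dsum a + (int (length a) + 1))"
    unfolding walk_gf_add[of _ dsum "\<lambda>a. int (length a) + 1"] walk_gf_length Mbgf_walk_gf Mgf_walk_gf ..
  moreover have "walk_gf True (\<lambda>a. dsum a + (int (length a) + 1)) * walk_gf nonneg (\<lambda>_. 1)
      + walk_gf True (\<lambda>_. 1) * walk_gf nonneg dsum
      = Abs_fps (\<lambda>m. \<Sum>(a, b)\<in>walk_pairs True nonneg m.
          of_int (dsum (U # a @ D # b)) * u_fract ^ (marks a + marks b))"
    unfolding walk_gf_mult
    by (rule fps_ext)
       (auto simp: sum.distrib[symmetric] walk_pairs_def dsum_arch algebra_simps intro!: sum.cong)
  ultimately show ?thesis
    by (simp add: step_gf_U Mgf_walk_gf)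
qed

lemma Mgf_eq: "Mgf = 1 + fps_X * (1 + uvar) * Mgf + uvar * fps_X ^ 2 * Mgf ^ 2"
  using walk_gf_decompose[of "\<lambda>_. 1" True]
  by (simp add: step_gf_U_count Mgf_walk_gf[symmetric] algebra_simps power2_eq_square)

lemma Wgf_eq: "Wgf = 1 + fps_X * (1 + uvar) * Wgf + 2 * uvar * fps_X ^ 2 * Mgf * Wgf"
  using walk_gf_decompose[of "\<lambda>_. 1" False]
  by (simp add: step_gf_U_count Wgf_walk_gf[symmetric] algebra_simps power2_eq_square)

lemma Mbgf_eq:
  "Mbgf = fps_X * (1 + uvar) * Mbgf
     + uvar * fps_X ^ 2 * (Mgf * Mbgf + Mbgf * Mgf + Mgf * fps_deriv (fps_X * Mgf))"
  using walk_gf_decompose[of dsum True]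
  by (simp add: step_gf_U_dsum dsum_flat_Cons dsum_mirror Mgf_walk_gf[symmetric]
      Mbgf_walk_gf[symmetric] algebra_simps power2_eq_square)

lemma Wbgf_eq:
  "Wbgf = fps_X * (1 + uvar) * Wbgf
     + 2 * uvar * fps_X ^ 2 * (Mgf * Wbgf + Mbgf * Wgf + Wgf * fps_deriv (fps_X * Mgf))"
  using walk_gf_decompose[of dsum False]
  by (simp add: step_gf_U_dsum dsum_flat_Cons dsum_mirror Wgf_walk_gf[symmetric]
      Wbgf_walk_gf[symmetric] algebra_simps power2_eq_square)

lemma fps_deriv_uvar [simp]: "fps_deriv uvar = 0"
  by (simp add: uvar_def)

definition Wgf_recip :: bgf where
  "Wgf_recip = 1 - (1 + uvar) * fps_X - 2 * uvar * fps_X ^ 2 * Mgf"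

lemma Wgf_mult_recip: "Wgf * Wgf_recip = 1"
  using Wgf_eq unfolding Wgf_recip_def by algebra

lemma Wgf_recip_squared: "Wgf_recip ^ 2 = (uvar - 1) ^ 2 * fps_X ^ 2 - 2 * (uvar + 1) * fps_X + 1"
  using Mgf_eq unfolding Wgf_recip_def by algebra

lemma fps_deriv_Mgf:
  "fps_deriv Mgf = (1 + uvar) * (Mgf + fps_X * fps_deriv Mgf)
     + 2 * uvar * fps_X * Mgf * (Mgf + fps_X * fps_deriv Mgf)"
proof -
  have "fps_deriv Mgf = fps_deriv (1 + fps_X * (1 + uvar) * Mgf + uvar * fps_X ^ 2 * Mgf ^ 2)"
    using Mgf_eq by (rule arg_cong)
  then show ?thesis by (simp add: algebra_simps power2_eq_square)
qed

lemma deriv_X_Mgf_mult_recip: "fps_deriv (fps_X * Mgf) * Wgf_recip = Mgf"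
  using Mgf_eq fps_deriv_Mgf unfolding Wgf_recip_def fps_deriv_mult fps_deriv_fps_X by algebra

lemma Mbgf_mult_recip: "Mbgf * Wgf_recip = uvar * fps_X ^ 2 * Mgf * fps_deriv (fps_X * Mgf)"
  using Mbgf_eq unfolding Wgf_recip_def by algebra

lemma Wbgf_mult_recip:
  "Wbgf * Wgf_recip = 2 * uvar * fps_X ^ 2 * Wgf * (Mbgf + fps_deriv (fps_X * Mgf))"
  using Wbgf_eq unfolding Wgf_recip_def by algebra

lemma Mgf_mult_recip_plus: "Mgf * (uvar * fps_X ^ 2 * Mgf + Wgf_recip) = 1"
  using Mgf_eq unfolding Wgf_recip_def by algebra

lemma Wbgf_mult_discriminant_squared:
  "Wbgf * ((uvar - 1) ^ 2 * fps_X ^ 2 - 2 * (uvar + 1) * fps_X + 1) ^ 2 = 2 * uvar * fps_X ^ 2"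
proof -
  let ?L = Wgf_recip and ?N = "fps_deriv (fps_X * Mgf)"
  have "Wbgf * ((uvar - 1) ^ 2 * fps_X ^ 2 - 2 * (uvar + 1) * fps_X + 1) ^ 2 = Wbgf * ?L * ?L * ?L * ?L"
    unfolding Wgf_recip_squared[symmetric] by (simp add: power2_eq_square mult_ac)
  also have "\<dots> = 2 * uvar * fps_X ^ 2 * (Wgf * ?L) * (Mbgf * ?L + ?N * ?L) * ?L"
    by (simp add: Wbgf_mult_recip algebra_simps del: fps_deriv_mult)
  also have "\<dots> = 2 * uvar * fps_X ^ 2 * (uvar * fps_X ^ 2 * Mgf * Mgf + Mgf * ?L)"
    using Wgf_mult_recip Mbgf_mult_recip deriv_X_Mgf_mult_recip
    by (simp add: algebra_simps del: fps_deriv_mult)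
  also have "\<dots> = 2 * uvar * fps_X ^ 2 * (Mgf * (uvar * fps_X ^ 2 * Mgf + ?L))"
    by (simp add: algebra_simps)
  also have "\<dots> = 2 * uvar * fps_X ^ 2"
    by (simp add: Mgf_mult_recip_plus)
  finally show ?thesis .
qed

theorem proposition3p4:
  shows "Wbgf = fps_X * (1 + uvar) * Wbgf
            + 2 * uvar * fps_X ^ 2 * (Mgf * Wbgf + Mbgf * Wgf + Wgf * fps_deriv (fps_X * Mgf))
         \<and> Wbgf = 2 * uvar * fps_X ^ 2
            / ((uvar - 1) ^ 2 * fps_X ^ 2 - 2 * (uvar + 1) * fps_X + 1) ^ 2"
proof
  show "Wbgf = fps_X * (1 + uvar) * Wbgf
            + 2 * uvar * fps_X ^ 2 * (Mgf * Wbgf + Mbgf * Wgf + Wgf * fps_deriv (fps_X * Mgf))"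
    by (rule Wbgf_eq)
  define Q :: bgf where "Q = ((uvar - 1) ^ 2 * fps_X ^ 2 - 2 * (uvar + 1) * fps_X + 1) ^ 2"
  have "Q \<noteq> 0"
  proof
    assume "Q = 0"
    then have "Q $ 0 = 0" by simp
    then show False by (simp add: Q_def power2_eq_square uvar_def)
  qed
  then have "2 * uvar * fps_X ^ 2 / Q = Wbgf"
    using Wbgf_mult_discriminant_squared nonzero_mult_div_cancel_right[of Q Wbgf]
    unfolding Q_def[symmetric] by simp
  then show "Wbgf = 2 * uvar * fps_X ^ 2
            / ((uvar - 1) ^ 2 * fps_X ^ 2 - 2 * (uvar + 1) * fps_X + 1) ^ 2"
    unfolding Q_def by simp
qed

end
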